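(* Let $F=(A,R)$ be an abstract argumentation framework and $S\subseteq A$. Then $S$ is admissible in $F$ if and only if either $S=\emptyset$, or $S=S_1\cup S_2$ where $S_1$ is an initial set of $F$ and $S_2$ is an admissible set of the reduct $F^{S_1}$.
   Context: An abstract argumentation framework is a pair $F=(A,R)$ with $A$ a finite set of arguments and $R\subseteq A\times A$ (write $a\to b$ for $(a,b)\in R$). For $S\subseteq A$: $S^+=\{a\in A\mid \exists b\in S: b\to a\}$, $S^-=\{a\in A\mid \exists b\in S: a\to b\}$. $S$ is conflict-free if there are no $a,b\in S$ with $a\to b$. $S$ defends $b$ if for every $a$ with $a\to b$ there is $c\in S$ with $c\to a$. $S$ is admissible if it is conflict-free and defends all its elements. An initial set of $F$ is a non-empty admissible set $S$ such that no non-empty admissible $S'\subsetneq S$ exists. For $X\subseteq A$, $F|_X=(X,R\cap(X\times X))$. The $S$-reduct of $F$ is $F^{S}=F|_{A\setminus(S\cup S^+)}$. *)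

theory Defs
  imports Main
begin

definition AF :: "'a set \<Rightarrow> ('a \<times> 'a) set \<Rightarrow> bool" where
  "AF A R \<longleftrightarrow> finite A \<and> R \<subseteq> A \<times> A"

definition attacked_by :: "'a set \<Rightarrow> ('a \<times> 'a) set \<Rightarrow> 'a set \<Rightarrow> 'a set" where
  "attacked_by A R S = {a \<in> A. \<exists>b\<in>S. (b, a) \<in> R}"

definition attackers_of :: "'a set \<Rightarrow> ('a \<times> 'a) set \<Rightarrow> 'a set \<Rightarrow> 'a set" where
  "attackers_of A R S = {a \<in> A. \<exists>b\<in>S. (a, b) \<in> R}"

definition conflict_free :: "('a \<times> 'a) set \<Rightarrow> 'a set \<Rightarrow> bool" where
  "conflict_free R S \<longleftrightarrow> (\<forall>a\<in>S. \<forall>b\<in>S. (a, b) \<notin> R)"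

definition defends :: "('a \<times> 'a) set \<Rightarrow> 'a set \<Rightarrow> 'a \<Rightarrow> bool" where
  "defends R S b \<longleftrightarrow> (\<forall>a. (a, b) \<in> R \<longrightarrow> (\<exists>c\<in>S. (c, a) \<in> R))"

definition admissible :: "'a set \<Rightarrow> ('a \<times> 'a) set \<Rightarrow> 'a set \<Rightarrow> bool" where
  "admissible A R S \<longleftrightarrow> S \<subseteq> A \<and> conflict_free R S \<and> (\<forall>b\<in>S. defends R S b)"

definition initial :: "'a set \<Rightarrow> ('a \<times> 'a) set \<Rightarrow> 'a set \<Rightarrow> bool" where
  "initial A R S \<longleftrightarrow> S \<noteq> {} \<and> admissible A R S \<and>
     \<not> (\<exists>S'. S' \<noteq> {} \<and> S' \<subset> S \<and> admissible A R S')"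

definition restrict_rel :: "('a \<times> 'a) set \<Rightarrow> 'a set \<Rightarrow> ('a \<times> 'a) set" where
  "restrict_rel R X = R \<inter> (X \<times> X)"

definition reduct_args :: "'a set \<Rightarrow> ('a \<times> 'a) set \<Rightarrow> 'a set \<Rightarrow> 'a set" where
  "reduct_args A R S = A - (S \<union> attacked_by A R S)"

definition reduct_rel :: "'a set \<Rightarrow> ('a \<times> 'a) set \<Rightarrow> 'a set \<Rightarrow> ('a \<times> 'a) set" where
  "reduct_rel A R S = restrict_rel R (reduct_args A R S)"

end

theory Submission
  imports Defs
begin

text \<open>A non-empty admissible set contains a non-empty admissible subset of least cardinality,
  which is initial; what the initial part leaves over survives in the reduct, because
  conflict-freeness keeps it unattacked by the initial part. Conversely, an initial set
  (indeed any admissible set) defends itself, and an attacker of the reduct part is either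
  counter-attacked by the initial part or lies in the reduct, where the reduct part defends
  against it.\<close>

lemma reduct_args_iff:
  "x \<in> reduct_args A R S \<longleftrightarrow> x \<in> A \<and> x \<notin> S \<and> (\<forall>y\<in>S. (y, x) \<notin> R)"
  by (auto simp: reduct_args_def attacked_by_def)

lemma reduct_rel_iff:
  "(x, y) \<in> reduct_rel A R S \<longleftrightarrow>
     (x, y) \<in> R \<and> x \<in> reduct_args A R S \<and> y \<in> reduct_args A R S"
  by (simp add: reduct_rel_def restrict_rel_def)

lemma admissible_empty: "admissible A R {}"
  by (simp add: admissible_def conflict_free_def)

lemma admissible_contains_initial:
  assumes "finite S" and "admissible A R S" and "S \<noteq> {}"
  obtains S1 where "S1 \<subseteq> S" and "initial A R S1"
proof -
  let ?P = "\<lambda>T. T \<noteq> {} \<and> T \<subseteq> S \<and> admissible A R T"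
  obtain S1 where S1: "?P S1" and least: "\<And>T. ?P T \<Longrightarrow> card S1 \<le> card T"
    using ex_has_least_nat[of ?P S card] assms(2,3) by blast
  have "finite S1"
    using S1 assms(1) finite_subset by blast
  have "\<not> (\<exists>S'. S' \<noteq> {} \<and> S' \<subset> S1 \<and> admissible A R S')"
  proof
    assume "\<exists>S'. S' \<noteq> {} \<and> S' \<subset> S1 \<and> admissible A R S'"
    then obtain S' where "S' \<noteq> {}" "S' \<subset> S1" "admissible A R S'"
      by blast
    then have "card S1 \<le> card S'" and "card S' < card S1"
      using least[of S'] S1 psubset_card_mono[OF \<open>finite S1\<close>] by auto
    then show False
      by simp
  qed
  then have "initial A R S1"
    using S1 by (simp add: initial_def)
  then show thesis
    using S1 that by blast
qed

lemma admissible_diff_in_reduct: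
  assumes adm: "admissible A R S" and "S1 \<subseteq> S"
  shows "admissible (reduct_args A R S1) (reduct_rel A R S1) (S - S1)"
proof -
  have cf: "conflict_free R S" and def: "\<And>b. b \<in> S \<Longrightarrow> defends R S b"
    using adm by (auto simp: admissible_def)
  have in_reduct: "x \<in> reduct_args A R S1" if "x \<in> S - S1" for x
    using that \<open>S1 \<subseteq> S\<close> cf adm
    by (auto simp: reduct_args_iff conflict_free_def admissible_def)
  have "defends (reduct_rel A R S1) (S - S1) b" if b_in: "b \<in> S - S1" for b
    unfolding defends_def
  proof (intro allI impI)
    fix a
    assume "(a, b) \<in> reduct_rel A R S1"
    then have "(a, b) \<in> R" and a_red: "a \<in> reduct_args A R S1"
      by (simp_all add: reduct_rel_iff)
    then obtain c where "c \<in> S" and "(c, a) \<in> R"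
      using def[of b] b_in by (auto simp: defends_def)
    moreover have "c \<notin> S1"
      using a_red \<open>(c, a) \<in> R\<close> by (auto simp: reduct_args_iff)
    ultimately show "\<exists>c\<in>S - S1. (c, a) \<in> reduct_rel A R S1"
      using in_reduct a_red by (auto simp: reduct_rel_iff)
  qed
  moreover have "conflict_free (reduct_rel A R S1) (S - S1)"
    using cf by (auto simp: conflict_free_def reduct_rel_iff)
  ultimately show ?thesis
    using in_reduct by (auto simp: admissible_def)
qed

lemma admissible_Un_reduct:
  assumes "R \<subseteq> A \<times> A"
    and adm1: "admissible A R S1"
    and adm2: "admissible (reduct_args A R S1) (reduct_rel A R S1) S2"
  shows "admissible A R (S1 \<union> S2)"
proof -
  have cf1: "conflict_free R S1" and def1: "\<And>b. b \<in> S1 \<Longrightarrow> defends R S1 b"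
    using adm1 by (auto simp: admissible_def)
  have S2_red: "S2 \<subseteq> reduct_args A R S1"
    and cf2: "conflict_free (reduct_rel A R S1) S2"
    and def2: "\<And>b. b \<in> S2 \<Longrightarrow> defends (reduct_rel A R S1) S2 b"
    using adm2 by (auto simp: admissible_def)
  have unattacked: "(x, y) \<notin> R" if "x \<in> S1" "y \<in> S2" for x y
    using that S2_red by (auto simp: reduct_args_iff)
  have "conflict_free R (S1 \<union> S2)"
    unfolding conflict_free_def
  proof (intro ballI notI)
    fix x y
    assume "x \<in> S1 \<union> S2" "y \<in> S1 \<union> S2" and xy: "(x, y) \<in> R"
    then consider "y \<in> S1" "x \<in> S1" | "y \<in> S1" "x \<in> S2" | "y \<in> S2" "x \<in> S1" | "y \<in> S2" "x \<in> S2"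
      by blast
    then show False
    proof cases
      case 1
      then show ?thesis using cf1 xy by (auto simp: conflict_free_def)
    next
      case 2
      \<comment> \<open>S1 defends y against x, and the defender would attack x in S2\<close>
      then show ?thesis
        using def1[of y] xy unattacked by (auto simp: defends_def)
    next
      case 3
      then show ?thesis using unattacked xy by blast
    next
      case 4
      then show ?thesis
        using cf2 xy S2_red by (auto simp: conflict_free_def reduct_rel_iff)
    qed
  qed
  moreover have "defends R (S1 \<union> S2) b" if "b \<in> S1 \<union> S2" for b
    unfolding defends_def
  proof (intro allI impI)
    fix a
    assume ab: "(a, b) \<in> R"
    show "\<exists>c\<in>S1 \<union> S2. (c, a) \<in> R"
    proof (cases "b \<in> S1 \<or> (\<exists>c\<in>S1. (c, a) \<in> R)")
      case True
      then show ?thesis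
        using def1 ab by (auto simp: defends_def)
    next
      case False
      then have "b \<in> S2"
        using that by blast
      moreover have "a \<in> reduct_args A R S1"
        using False ab \<open>R \<subseteq> A \<times> A\<close> unattacked[OF _ \<open>b \<in> S2\<close>] by (auto simp: reduct_args_iff)
      ultimately have "(a, b) \<in> reduct_rel A R S1"
        using ab S2_red by (auto simp: reduct_rel_iff)
      then show ?thesis
        using def2[OF \<open>b \<in> S2\<close>] by (auto simp: defends_def reduct_rel_iff)
    qed
  qed
  ultimately show ?thesis
    using adm1 S2_red by (auto simp: admissible_def reduct_args_iff)
qed

theorem theorem1:
  fixes A :: "'a set" and R :: "('a \<times> 'a) set" and S :: "'a set"
  assumes "AF A R" and "S \<subseteq> A"
  shows "admissible A R S \<longleftrightarrow>
           (S = {} \<or>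
            (\<exists>S1 S2. S = S1 \<union> S2 \<and> initial A R S1 \<and>
               admissible (reduct_args A R S1) (reduct_rel A R S1) S2))"
proof
  assume adm: "admissible A R S"
  show "S = {} \<or> (\<exists>S1 S2. S = S1 \<union> S2 \<and> initial A R S1 \<and>
          admissible (reduct_args A R S1) (reduct_rel A R S1) S2)"
  proof (cases "S = {}")
    case False
    have "finite S"
      using assms finite_subset by (auto simp: AF_def)
    then obtain S1 where "S1 \<subseteq> S" and "initial A R S1"
      using admissible_contains_initial adm False by blast
    moreover have "S = S1 \<union> (S - S1)"
      using \<open>S1 \<subseteq> S\<close> by blast
    ultimately show ?thesis
      using admissible_diff_in_reduct[OF adm] by blast
  qed simp
next
  assume "S = {} \<or> (\<exists>S1 S2. S = S1 \<union> S2 \<and> initial A R S1 \<and>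
            admissible (reduct_args A R S1) (reduct_rel A R S1) S2)"
  then show "admissible A R S"
  proof (elim disjE exE conjE)
    fix S1 S2
    assume "S = S1 \<union> S2" and "initial A R S1"
      and "admissible (reduct_args A R S1) (reduct_rel A R S1) S2"
    moreover have "R \<subseteq> A \<times> A" and "admissible A R S1"
      using assms(1) \<open>initial A R S1\<close> by (simp_all add: AF_def initial_def)
    ultimately show ?thesis
      using admissible_Un_reduct by blast
  qed (simp add: admissible_empty)
qed

end
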